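(* Let $\mathcal{T}$ be a finite or countably infinite set, let $\prec$ be a strict total order on $\mathcal{T}$, and let $\mathbf{p} \ne \mathbf{q}$ be two probability distributions on $\mathcal{T}$. For each positive integer $m$, let $X_0 \sim \mathbf{q}$, $X_1,\dots,X_m \sim^{\mathrm{iid}} \mathbf{p}$, $U_0,\dots,U_m \sim^{\mathrm{iid}} \mathrm{Uniform}(0,1)$ be mutually independent, and let $R_m = \sum_{j=1}^m \big(\mathbb{I}[X_j \prec X_0] + \mathbb{I}[X_j = X_0, U_j < U_0]\big)$. Let $M \ge 1$ be such that $R_M$ is not uniformly distributed on $\{0,1,\dots,M\}$. Then for all $m \ge M$, $R_m$ is not uniformly distributed on $\{0,1,\dots,m\}$.
   Context: $\mathbb{I}[\cdot]$ denotes the indicator of an event. (Such an $M$ exists whenever $\mathbf{p}\neq\mathbf{q}$.) *)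

theory Defs
  imports "HOL-Probability.Probability"
begin

definition unif01 :: "real measure" where
  "unif01 = uniform_measure lborel {0<..<1}"

text \<open>The sample space for R_m: first component is (X_0, U_0), second component
  is the family (X_j, U_j) for j = 1..m, all mutually independent.\<close>
definition rank_space :: "'a pmf \<Rightarrow> 'a pmf \<Rightarrow> nat \<Rightarrow> (('a \<times> real) \<times> (nat \<Rightarrow> 'a \<times> real)) measure" where
  "rank_space p q m =
     (measure_pmf q \<Otimes>\<^sub>M unif01) \<Otimes>\<^sub>M (PiM {1..m} (\<lambda>_. measure_pmf p \<Otimes>\<^sub>M unif01))"

text \<open>R_m = sum_{j=1}^m (I[X_j < X_0] + I[X_j = X_0, U_j < U_0]), with the strict order
  given by the relation r ((a,b) \<in> r means a precedes b).\<close>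
definition rank_stat :: "('a \<times> 'a) set \<Rightarrow> nat \<Rightarrow> ('a \<times> real) \<times> (nat \<Rightarrow> 'a \<times> real) \<Rightarrow> nat" where
  "rank_stat r m \<omega> =
     (\<Sum>j\<in>{1..m}. of_bool ((fst (snd \<omega> j), fst (fst \<omega>)) \<in> r)
                 + of_bool (fst (snd \<omega> j) = fst (fst \<omega>) \<and> snd (snd \<omega> j) < snd (fst \<omega>)))"

definition rank_law :: "('a \<times> 'a) set \<Rightarrow> 'a pmf \<Rightarrow> 'a pmf \<Rightarrow> nat \<Rightarrow> nat measure" where
  "rank_law r p q m = distr (rank_space p q m) (count_space UNIV) (rank_stat r m)"

definition rank_uniform :: "('a \<times> 'a) set \<Rightarrow> 'a pmf \<Rightarrow> 'a pmf \<Rightarrow> nat \<Rightarrow> bool" where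
  "rank_uniform r p q m \<longleftrightarrow> rank_law r p q m = measure_pmf (pmf_of_set {0..m})"

end

theory Submission
  imports Defs
begin

text \<open>Conditionally on \<open>(X\<^sub>0, U\<^sub>0) = w\<close>, the summands of \<open>R\<^sub>m\<close> are i.i.d. Bernoulli
  variables with some success probability \<open>\<theta>(w)\<close>, so the law of \<open>R\<^sub>m\<close> is the mixture over
  \<open>w\<close> of \<open>Binomial(m, \<theta>(w))\<close>. Binomial probabilities satisfy
  \<open>(n+1) b\<^sub>n(k) = (k+1) b\<^sub>n\<^sub>+\<^sub>1(k+1) + (n+1-k) b\<^sub>n\<^sub>+\<^sub>1(k)\<close>, and integrating over \<open>w\<close> transfers
  this identity to \<open>P(R\<^sub>n = k)\<close>. If \<open>R\<^sub>n\<^sub>+\<^sub>1\<close> is uniform, the right-hand side equals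
  \<open>(n+2)/(n+2) = 1\<close>, so \<open>R\<^sub>n\<close> is uniform as well; by induction, uniformity of some \<open>R\<^sub>m\<close>
  with \<open>m \<ge> M\<close> would force uniformity of \<open>R\<^sub>M\<close>.\<close>

lemma space_unif01 [simp]: "space unif01 = UNIV"
  by (simp add: unif01_def)

lemma sets_unif01 [simp, measurable_cong]: "sets unif01 = sets borel"
  by (simp add: unif01_def)

lemma prob_space_unif01: "prob_space unif01"
  unfolding unif01_def by (rule prob_space_uniform_measure) auto

lemma prob_space_pmf_unif01: "prob_space (measure_pmf p \<Otimes>\<^sub>M unif01)"
  by (intro prob_space_pair prob_space_unif01 prob_space_measure_pmf)

lemma prob_space_rank_space: "prob_space (rank_space p q m)"
  unfolding rank_space_def by (intro prob_space_pair prob_space_pmf_unif01 prob_space_PiM)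

lemma measurable_measure_Pair:
  assumes "prob_space M2" and X: "X \<in> sets (M1 \<Otimes>\<^sub>M M2)"
  shows "(\<lambda>x. measure M2 (Pair x -` X)) \<in> borel_measurable M1"
proof -
  interpret M2: prob_space M2 by fact
  have "(\<lambda>x. enn2real (emeasure M2 (Pair x -` X))) \<in> borel_measurable M1"
    using M2.measurable_emeasure_Pair[OF X] by measurable
  then show ?thesis
    by (simp add: measure_def)
qed

lemma measure_pair_measure_eq_integral:
  assumes "prob_space M1" "prob_space M2" and X: "X \<in> sets (M1 \<Otimes>\<^sub>M M2)"
  shows "measure (M1 \<Otimes>\<^sub>M M2) X = (\<integral>x. measure M2 (Pair x -` X) \<partial>M1)"
proof -
  interpret M1: prob_space M1 by fact
  interpret M2: prob_space M2 by fact
  have int: "integrable M1 (\<lambda>x. measure M2 (Pair x -` X))"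
    by (rule M1.integrable_const_bound[where B=1])
      (use measurable_measure_Pair[OF \<open>prob_space M2\<close> X] in auto)
  have "emeasure (M1 \<Otimes>\<^sub>M M2) X = (\<integral>\<^sup>+x. ennreal (measure M2 (Pair x -` X)) \<partial>M1)"
    by (simp add: M2.emeasure_pair_measure_alt[OF X] M2.emeasure_eq_measure)
  also have "\<dots> = ennreal (\<integral>x. measure M2 (Pair x -` X) \<partial>M1)"
    by (rule nn_integral_eq_integral[OF int]) simp
  finally show ?thesis
    by (simp add: measure_def integral_nonneg_AE)
qed

lemma PiE_cases_hits:
  assumes "y \<in> PiE I (\<lambda>i. if i \<in> S then A else B)" "S \<subseteq> I" "A \<inter> B = {}"
  shows "{i\<in>I. y i \<in> A} = S"
  using assms by (fastforce dest: PiE_mem)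

lemma PiM_card_hits_eq_UN_PiE:
  assumes "A \<subseteq> space N"
  shows "{y \<in> space (PiM I (\<lambda>_. N)). card {i\<in>I. y i \<in> A} = k}
    = (\<Union>S\<in>{S. S \<subseteq> I \<and> card S = k}. PiE I (\<lambda>i. if i \<in> S then A else space N - A))"
    (is "?L = (\<Union>S\<in>?Sk. ?F S)")
proof (intro equalityI subsetI)
  fix y assume "y \<in> ?L"
  then have "{i\<in>I. y i \<in> A} \<in> ?Sk" "y \<in> ?F {i\<in>I. y i \<in> A}"
    using assms by (auto simp: space_PiM PiE_iff)
  then show "y \<in> (\<Union>S\<in>?Sk. ?F S)" by blast
next
  fix y assume "y \<in> (\<Union>S\<in>?Sk. ?F S)"
  then obtain S where "S \<in> ?Sk" "y \<in> ?F S" by blast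
  moreover have "?F S \<subseteq> space (PiM I (\<lambda>_. N))"
    using assms unfolding space_PiM by (intro PiE_mono) auto
  ultimately show "y \<in> ?L"
    using PiE_cases_hits[of y I S A "space N - A"] by auto
qed

lemma measure_PiM_PiE_cases:
  fixes N :: "'b measure"
  assumes "prob_space N" "finite I" "A \<in> sets N" "S \<subseteq> I"
  shows "measure (PiM I (\<lambda>_. N)) (PiE I (\<lambda>i. if i \<in> S then A else space N - A))
    = measure N A ^ card S * (1 - measure N A) ^ (card I - card S)"
proof -
  interpret N: prob_space N by fact
  interpret P: finite_product_prob_space "\<lambda>_. N" I
    by unfold_locales fact
  have "measure (PiM I (\<lambda>_. N)) (PiE I (\<lambda>i. if i \<in> S then A else space N - A))
      = (\<Prod>i\<in>I. if i \<in> S then measure N A else 1 - measure N A)"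
    using assms by (subst P.prob_times) (auto intro!: prod.cong simp: N.prob_compl)
  also have "\<dots> = measure N A ^ card S * (1 - measure N A) ^ card (I - S)"
    using assms by (simp add: prod.If_cases Int_absorb1 Diff_eq)
  finally show ?thesis
    using assms by (simp add: card_Diff_subset rev_finite_subset)
qed

lemma measure_PiM_card_hits:
  fixes N :: "'b measure"
  assumes "prob_space N" "finite I" and A: "A \<in> sets N"
  shows "measure (PiM I (\<lambda>_. N)) {y \<in> space (PiM I (\<lambda>_. N)). card {i\<in>I. y i \<in> A} = k}
    = pmf (binomial_pmf (card I) (measure N A)) k"
proof -
  interpret N: prob_space N by fact
  interpret P: finite_product_prob_space "\<lambda>_. N" I
    by unfold_locales fact
  define F where "F S = PiE I (\<lambda>i. if i \<in> S then A else space N - A)" for S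
  define Sk where "Sk = {S. S \<subseteq> I \<and> card S = k}"
  have "disjoint_family_on F Sk"
  proof (unfold disjoint_family_on_def, intro ballI impI equals0I)
    fix S T y assume "S \<in> Sk" "T \<in> Sk" "S \<noteq> T" "y \<in> F S \<inter> F T"
    then show False
      using PiE_cases_hits[of y I S A "space N - A"] PiE_cases_hits[of y I T A "space N - A"]
      by (auto simp: F_def Sk_def)
  qed
  moreover have "F S \<in> sets (PiM I (\<lambda>_. N))" for S
    unfolding F_def using A \<open>finite I\<close> by (intro sets_PiM_I_finite) auto
  ultimately have "measure (PiM I (\<lambda>_. N)) (\<Union>S\<in>Sk. F S) = (\<Sum>S\<in>Sk. measure (PiM I (\<lambda>_. N)) (F S))"
    using \<open>finite I\<close> by (intro P.finite_measure_finite_Union) (auto simp: Sk_def)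
  also have "\<dots> = (\<Sum>S\<in>Sk. measure N A ^ k * (1 - measure N A) ^ (card I - k))"
    by (rule sum.cong) (simp_all add: F_def Sk_def measure_PiM_PiE_cases[OF assms])
  also have "\<dots> = pmf (binomial_pmf (card I) (measure N A)) k"
    using \<open>finite I\<close> n_subsets[of I k] by (simp add: Sk_def mult.assoc)
  finally show ?thesis
    using PiM_card_hits_eq_UN_PiE[OF sets.sets_into_space[OF A], of I k]
    by (simp add: F_def Sk_def)
qed

definition beats :: "('a \<times> 'a) set \<Rightarrow> 'a \<times> real \<Rightarrow> 'a \<times> real \<Rightarrow> bool" where
  "beats r w z \<longleftrightarrow> (fst z, fst w) \<in> r \<or> fst z = fst w \<and> snd z < snd w"

definition beat_prob :: "('a \<times> 'a) set \<Rightarrow> 'a pmf \<Rightarrow> 'a \<times> real \<Rightarrow> real" where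
  "beat_prob r p w = measure (measure_pmf p \<Otimes>\<^sub>M unif01) {z. beats r w z}"

text \<open>Irreflexivity of \<open>r\<close> keeps the two indicators of a summand from both being 1.\<close>

lemma rank_stat_eq_card:
  assumes "irrefl r"
  shows "rank_stat r m \<omega> = card {j\<in>{1..m}. beats r (fst \<omega>) (snd \<omega> j)}"
proof -
  have "rank_stat r m \<omega> = (\<Sum>j\<in>{1..m}. of_bool (beats r (fst \<omega>) (snd \<omega> j)))"
    using assms unfolding rank_stat_def beats_def irrefl_def
    by (intro sum.cong) auto
  then show ?thesis
    by (simp add: Int_def)
qed

lemma rank_stat_le:
  assumes "irrefl r"
  shows "rank_stat r m \<omega> \<le> m"
proof -
  have "card {j\<in>{1..m}. beats r (fst \<omega>) (snd \<omega> j)} \<le> card {1..m}"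
    by (intro card_mono) auto
  then show ?thesis
    by (simp add: rank_stat_eq_card[OF assms])
qed

lemma pred_beats:
  fixes r :: "('a::countable \<times> 'a) set"
  shows "Measurable.pred ((measure_pmf q \<Otimes>\<^sub>M unif01) \<Otimes>\<^sub>M (measure_pmf p \<Otimes>\<^sub>M unif01))
    (\<lambda>(w, z). beats r w z)"
  unfolding beats_def by measurable

lemma sets_beats:
  fixes r :: "('a::countable \<times> 'a) set"
  shows "{z. beats r w z} \<in> sets (measure_pmf p \<Otimes>\<^sub>M unif01)"
proof -
  have "Measurable.pred (measure_pmf p \<Otimes>\<^sub>M unif01) (beats r w)"
    unfolding beats_def by measurable
  then show ?thesis
    by (simp add: pred_def space_pair_measure)
qed

lemma rank_stat_measurable [measurable]:
  fixes r :: "('a::countable \<times> 'a) set"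
  shows "rank_stat r m \<in> measurable (rank_space p q m) (count_space UNIV)"
  unfolding rank_space_def rank_stat_def by measurable

lemma beat_prob_measurable [measurable]:
  fixes r :: "('a::countable \<times> 'a) set"
  shows "beat_prob r p \<in> borel_measurable (measure_pmf q \<Otimes>\<^sub>M unif01)"
proof -
  have "{(w, z). beats r w z} \<in> sets ((measure_pmf q \<Otimes>\<^sub>M unif01) \<Otimes>\<^sub>M (measure_pmf p \<Otimes>\<^sub>M unif01))"
    using pred_beats[of r q p] by (simp add: pred_def space_pair_measure)
  from measurable_measure_Pair[OF prob_space_pmf_unif01 this] show ?thesis
    by (simp add: beat_prob_def[abs_def])
qed

lemma measure_rank_law_eq_integral:
  fixes r :: "('a::countable \<times> 'a) set"
  assumes "irrefl r"
  shows "measure (rank_law r p q m) {k}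
    = (\<integral>w. pmf (binomial_pmf m (beat_prob r p w)) k \<partial>(measure_pmf q \<Otimes>\<^sub>M unif01))"
proof -
  define P where "P = PiM {1..m} (\<lambda>_. measure_pmf p \<Otimes>\<^sub>M unif01)"
  define X where "X = rank_stat r m -` {k} \<inter> space (rank_space p q m)"
  have rank_space_eq: "rank_space p q m = (measure_pmf q \<Otimes>\<^sub>M unif01) \<Otimes>\<^sub>M P"
    by (simp add: rank_space_def P_def)
  have "measure (rank_law r p q m) {k} = measure (rank_space p q m) X"
    unfolding rank_law_def X_def by (rule measure_distr) auto
  also have "\<dots> = (\<integral>w. measure P (Pair w -` X) \<partial>(measure_pmf q \<Otimes>\<^sub>M unif01))"
    using measurable_sets[OF rank_stat_measurable, of "{k}" r m p q] unfolding rank_space_eq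
    by (intro measure_pair_measure_eq_integral)
      (auto simp: P_def X_def rank_space_def prob_space_pmf_unif01 prob_space_PiM)
  also have "\<dots> = (\<integral>w. pmf (binomial_pmf m (beat_prob r p w)) k \<partial>(measure_pmf q \<Otimes>\<^sub>M unif01))"
  proof (rule Bochner_Integration.integral_cong [OF refl])
    fix w
    have "Pair w -` X = {y \<in> space P. card {j\<in>{1..m}. y j \<in> {z. beats r w z}} = k}"
      by (auto simp: X_def rank_space_eq space_pair_measure rank_stat_eq_card[OF assms])
    then show "measure P (Pair w -` X) = pmf (binomial_pmf m (beat_prob r p w)) k"
      using measure_PiM_card_hits[OF prob_space_pmf_unif01 _ sets_beats, of "{1..m}" p r w k]
      by (simp add: P_def beat_prob_def)
  qed
  finally show ?thesis .
qed

lemma binomial_pmf_recurrence: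
  assumes "0 \<le> \<theta>" "\<theta> \<le> 1"
  shows "real (Suc n) * pmf (binomial_pmf n \<theta>) k
    = real (Suc k) * pmf (binomial_pmf (Suc n) \<theta>) (Suc k)
      + real (Suc n - k) * pmf (binomial_pmf (Suc n) \<theta>) k"
proof (cases "k \<le> n")
  case True
  have c1: "real (Suc k) * real (Suc n choose Suc k) = real (Suc n) * real (n choose k)"
    using Suc_times_binomial[of k n] by (metis of_nat_mult)
  have c2: "real (Suc n - k) * real (Suc n choose k) = real (Suc n) * real (n choose k)"
    using binomial_absorb_comp[of "Suc n" k] by (metis diff_Suc_1 of_nat_mult)
  have e: "Suc n - k = Suc (n - k)"
    using True by simp
  have "real (Suc k) * pmf (binomial_pmf (Suc n) \<theta>) (Suc k)
      + real (Suc n - k) * pmf (binomial_pmf (Suc n) \<theta>) k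
    = (real (Suc k) * real (Suc n choose Suc k)) * (\<theta> ^ Suc k * (1 - \<theta>) ^ (n - k))
      + (real (Suc n - k) * real (Suc n choose k)) * (\<theta> ^ k * (1 - \<theta>) ^ Suc (n - k))"
    using assms by (simp only: pmf_binomial e diff_Suc_Suc)
  also have "\<dots> = real (Suc n) * real (n choose k) * (\<theta> ^ k * (1 - \<theta>) ^ (n - k)) * (\<theta> + (1 - \<theta>))"
    unfolding c1 c2 by (simp add: algebra_simps)
  finally show ?thesis
    using assms by simp
next
  case False
  then show ?thesis
    using assms by (simp add: binomial_eq_0 del: binomial_Suc_Suc)
qed

lemma beat_prob_bounds: "0 \<le> beat_prob r p w" "beat_prob r p w \<le> 1"
  unfolding beat_prob_def
  by (simp_all add: prob_space.prob_le_1[OF prob_space_pmf_unif01])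

lemma integrable_binomial_beat_prob:
  fixes r :: "('a::countable \<times> 'a) set"
  shows "integrable (measure_pmf q \<Otimes>\<^sub>M unif01) (\<lambda>w. pmf (binomial_pmf m (beat_prob r p w)) k)"
proof -
  interpret prob_space "measure_pmf q \<Otimes>\<^sub>M unif01"
    by (rule prob_space_pmf_unif01)
  have "(\<lambda>w. pmf (binomial_pmf m (beat_prob r p w)) k) \<in> borel_measurable (measure_pmf q \<Otimes>\<^sub>M unif01)"
    by (simp add: beat_prob_bounds)
  then show ?thesis
    by (intro integrable_const_bound[where B=1]) (simp_all add: pmf_le_1)
qed

lemma rank_law_recurrence:
  fixes r :: "('a::countable \<times> 'a) set"
  assumes "irrefl r"
  shows "real (Suc n) * measure (rank_law r p q n) {k}
    = real (Suc k) * measure (rank_law r p q (Suc n)) {Suc k}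
      + real (Suc n - k) * measure (rank_law r p q (Suc n)) {k}"
proof -
  let ?N = "measure_pmf q \<Otimes>\<^sub>M unif01"
  let ?B = "\<lambda>m k w. pmf (binomial_pmf m (beat_prob r p w)) k"
  have "real (Suc n) * measure (rank_law r p q n) {k} = (\<integral>w. real (Suc n) * ?B n k w \<partial>?N)"
    by (simp add: measure_rank_law_eq_integral[OF assms])
  also have "\<dots> = (\<integral>w. real (Suc k) * ?B (Suc n) (Suc k) w + real (Suc n - k) * ?B (Suc n) k w \<partial>?N)"
    by (intro Bochner_Integration.integral_cong refl binomial_pmf_recurrence beat_prob_bounds)
  also have "\<dots> = real (Suc k) * (\<integral>w. ?B (Suc n) (Suc k) w \<partial>?N)
      + real (Suc n - k) * (\<integral>w. ?B (Suc n) k w \<partial>?N)"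
    by (simp add: integrable_binomial_beat_prob)
  finally show ?thesis
    by (simp add: measure_rank_law_eq_integral[OF assms])
qed

lemma rank_uniform_iff:
  fixes r :: "('a::countable \<times> 'a) set"
  assumes "irrefl r"
  shows "rank_uniform r p q m \<longleftrightarrow> (\<forall>k\<le>m. measure (rank_law r p q m) {k} = 1 / real (Suc m))"
proof
  assume "rank_uniform r p q m"
  then show "\<forall>k\<le>m. measure (rank_law r p q m) {k} = 1 / real (Suc m)"
    by (simp add: rank_uniform_def measure_pmf_single)
next
  assume uniform: "\<forall>k\<le>m. measure (rank_law r p q m) {k} = 1 / real (Suc m)"
  interpret L: prob_space "rank_law r p q m"
    unfolding rank_law_def by (intro prob_space.prob_space_distr prob_space_rank_space) simp
  have "measure (rank_law r p q m) {k} = pmf (pmf_of_set {0..m}) k" for k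
  proof (cases "k \<le> m")
    case False
    have "rank_stat r m \<omega> \<noteq> k" for \<omega>
      using rank_stat_le[OF assms, of m \<omega>] False by simp
    then have "rank_stat r m -` {k} \<inter> space (rank_space p q m) = {}"
      by auto
    then show ?thesis
      using False by (simp add: rank_law_def measure_distr)
  qed (use uniform in simp)
  moreover have "sets (rank_law r p q m) = Pow UNIV"
    by (simp add: rank_law_def)
  ultimately show "rank_uniform r p q m"
    unfolding rank_uniform_def
    by (intro measure_eqI_countable[where A=UNIV])
      (simp_all add: L.emeasure_eq_measure emeasure_pmf_single)
qed

lemma rank_uniform_Suc_imp:
  fixes r :: "('a::countable \<times> 'a) set"
  assumes "irrefl r" "rank_uniform r p q (Suc n)"
  shows "rank_uniform r p q n"
  unfolding rank_uniform_iff[OF assms(1)]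
proof (intro allI impI)
  fix k assume "k \<le> n"
  have "real (Suc n) * measure (rank_law r p q n) {k}
      = (real (Suc k) + real (Suc n - k)) / real (Suc (Suc n))"
    using rank_law_recurrence[OF assms(1), of n p q k] assms(2) \<open>k \<le> n\<close>
    by (simp add: rank_uniform_iff[OF assms(1)] add_divide_distrib del: of_nat_Suc)
  also have "\<dots> = 1"
    using \<open>k \<le> n\<close> by (simp del: of_nat_Suc)
  finally show "measure (rank_law r p q n) {k} = 1 / real (Suc n)"
    by (simp add: eq_divide_eq mult.commute del: of_nat_Suc)
qed

theorem theorem3p4:
  fixes r :: "('a::countable \<times> 'a) set" and p q :: "'a pmf" and M :: nat
  assumes "strict_linear_order r"
    and "p \<noteq> q"
    and "M \<ge> 1"
    and "\<not> rank_uniform r p q M"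
  shows "\<forall>m\<ge>M. \<not> rank_uniform r p q m"
proof -
  have "irrefl r"
    using assms(1) by (simp add: strict_linear_order_on_def)
  then have "rank_uniform r p q (M + d) \<Longrightarrow> rank_uniform r p q M" for d
    by (induction d) (auto dest: rank_uniform_Suc_imp)
  then show ?thesis
    using assms(4) by (metis le_add_diff_inverse)
qed

end
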